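(* Consider the deterministic multiclass single-server system MCSS(RO) described in the context, with all $\lambda_j>0$, $\rho<1$, and constants $\Gamma_{a,j},\Gamma_{s,j}\ge0$ such that for all $k\ge1$ and $j=1,\dots,J$, $$\Big|\sum_{i=1}^k U^j_i-\lambda_j^{-1}k\Big|\le\Gamma_{a,j}\phi(k),\qquad \Big|\sum_{i=1}^k V^j_i-\mu_j^{-1}k\Big|\le\Gamma_{s,j}\phi(k).$$ Let $\Gamma=\max_j(\Gamma_{a,j},\Gamma_{s,j})$ and assume $\min_j\lambda_j\Gamma\ge e^{2e}$. Let $B$ be the duration of the busy period initiated at time $0$. Then $$B\le \frac{5(4J+3)^2\bar\lambda_{\max}^3\Gamma^4}{(1-\rho)^2}\ln\ln\frac{2(4J+3)\bar\lambda_{\max}^2\Gamma^2}{1-\rho},$$ and $$\sup_{0\le t\le B}W(t)\le \frac{2(4J+3)^2\bar\lambda_{\max}^3\Gamma^4}{1-\rho}\ln\ln\frac{(4J+3)\bar\lambda_{\max}^2\Gamma^2}{1-\rho}+\Gamma+3\bar\lambda_{\max}^2\Gamma^3.$$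
   Context: $\phi(x)=\sqrt{x\ln\ln x}$ for $x\ge e^e$ and $\phi(x)=1$ otherwise. MCSS(RO): one server, $J$ job classes with infinite buffers $B_1,\dots,B_J$; at time $0$ there is exactly one job in every buffer. For class $j$, deterministic nonnegative sequences $(U^j_k)_{k\ge1}$ (the $k$-th external arrival to class $j$ occurs at time $\sum_{i\le k}U^j_i$) and $(V^j_k)_{k\ge1}$ (service requirement of the $k$-th job of class $j$). $A_j(t)=\max\{k\ge0:\sum_{i=1}^kU^j_i\le t\}$, $A(t)=(A_j(t))_j$. Routing matrix $P\in\{0,1\}^{J\times J}$ with row sums in $\{0,1\}$ and $P^N=0$ for some $N$: after service in class $i$ a job moves to class $j$ if $P_{ij}=1$, otherwise leaves. The scheduling policy is an arbitrary work-conserving policy (FIFO within a class). $\lambda=(\lambda_j)$, $\bar\lambda=(I-P^T)^{-1}\lambda$, $\bar\lambda_{\max}=\max_j\bar\lambda_j$, $\bar A(t)=(I-P^T)^{-1}A(t)$, $m_j=\mu_j^{-1}$, $\rho=\sum_j\bar\lambda_j/\mu_j$. $W(t)$ is the workload at time $t$ (time needed to clear all work present, without further external arrivals); during the busy period starting at $0$ the paper uses the identity $W(t)=\sum_{j=1}^J\sum_{i=1}^{\bar A_j(t)}V^j_i-t$, and $B$ is the end of this busy period. *)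

theory Defs
  imports "HOL-Analysis.Analysis"
begin

definition phi :: "real \<Rightarrow> real" where
  "phi x = (if x \<ge> exp (exp 1) then sqrt (x * ln (ln x)) else 1)"

text \<open>Matrix power (the vec power of the library is componentwise, so we define it).\<close>
fun matpow :: "real^'n^'n \<Rightarrow> nat \<Rightarrow> real^'n^'n" where
  "matpow A 0 = mat 1"
| "matpow A (Suc n) = A ** matpow A n"

definition routing_matrix :: "real^'j^'j \<Rightarrow> bool" where
  "routing_matrix P \<longleftrightarrow>
     (\<forall>i j. P $ i $ j = 0 \<or> P $ i $ j = 1) \<and>
     (\<forall>i. (\<Sum>j\<in>UNIV. P $ i $ j) = 0 \<or> (\<Sum>j\<in>UNIV. P $ i $ j) = 1) \<and>
     (\<exists>N. matpow P N = 0)"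

definition arr :: "('j \<Rightarrow> nat \<Rightarrow> real) \<Rightarrow> 'j \<Rightarrow> real \<Rightarrow> nat" where
  "arr U j t = (GREATEST k. (\<Sum>i=1..k. U j i) \<le> t)"

definition arr_vec :: "('j::finite \<Rightarrow> nat \<Rightarrow> real) \<Rightarrow> real \<Rightarrow> real^'j" where
  "arr_vec U t = (\<chi> j. real (arr U j t))"

definition visit_matrix :: "real^'j^'j \<Rightarrow> real^'j^'j" where
  "visit_matrix P = matrix_inv (mat 1 - transpose P)"

definition tot_arr :: "real^'j^'j \<Rightarrow> ('j::finite \<Rightarrow> nat \<Rightarrow> real) \<Rightarrow> real \<Rightarrow> real^'j" where
  "tot_arr P U t = visit_matrix P *v arr_vec U t"

text \<open>Workload during the busy period starting at 0, via the paper's identity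
  W(t) = sum_j sum_{i=1}^{\bar A_j(t)} V^j_i - t.\<close>
definition workload ::
  "real^'j^'j \<Rightarrow> ('j::finite \<Rightarrow> nat \<Rightarrow> real) \<Rightarrow> ('j \<Rightarrow> nat \<Rightarrow> real) \<Rightarrow> real \<Rightarrow> real" where
  "workload P U V t =
     (\<Sum>j\<in>UNIV. \<Sum>i=1..nat \<lfloor>tot_arr P U t $ j\<rfloor>. V j i) - t"

definition busy_end ::
  "real^'j^'j \<Rightarrow> ('j::finite \<Rightarrow> nat \<Rightarrow> real) \<Rightarrow> ('j \<Rightarrow> nat \<Rightarrow> real) \<Rightarrow> real" where
  "busy_end P U V = Inf {t. 0 \<le> t \<and> workload P U V t \<le> 0}"

end

theory Submission
  imports Defs
begin

(* Since phi grows only like sqrt(k lnln k), it admits, for every slope delta,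
   an affine majorant  phi z <= delta*z + lnln(1/delta^2)/delta.  Using this with
   a slope d_arr we get a linear bound on the arrival counts A_j(t); using it a
   second time, with a slope d_srv of order (1-rho), the service fluctuation of
   all the work that has arrived by time t costs at most a quarter of the slack
   (1-rho)*t.  This yields the key estimate
       W(t) <= -(1-rho)*t/2 + E        (t >= 0)
   from which the busy period ends before 2E/(1-rho) and W stays below E. *)

(* Matrix powers also unfold on the right; needed to commute powers past transpose. *)
lemma matpow_Suc_right: "matpow A (Suc n) = matpow A n ** A"
  by (induction n) (simp_all add: matrix_mul_assoc)

lemma matpow_transpose: "transpose (matpow A n) = matpow (transpose A) n"
  by (induction n) (simp_all add: matrix_transpose_mul flip: matpow_Suc_right)

lemma matpow_nonneg:
  assumes "\<And>i j. A $ i $ j \<ge> (0::real)"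
  shows "matpow A n $ i $ j \<ge> 0"
  using assms by (induction n arbitrary: i j)
    (auto simp: mat_def matrix_matrix_mult_def intro!: sum_nonneg)

lemma geometric_matrix_sum:
  "(mat 1 - A) ** (\<Sum>n<N. matpow (A::real^'n^'n) n) = mat 1 - matpow A N"
proof (induction N)
  case 0
  then show ?case by (simp add: matrix_matrix_mult_def vec_eq_iff)
next
  case (Suc N)
  have "(mat 1 - A) ** matpow A N = mat 1 ** matpow A N - A ** matpow A N"
    by (simp add: matrix_matrix_mult_def vec_eq_iff sum_subtractf left_diff_distrib)
  then have "(mat 1 - A) ** matpow A N = matpow A N - matpow A (Suc N)"
    by simp
  with Suc show ?case by (simp add: matrix_add_ldistrib)
qed

lemma matrix_inv_eqI:
  fixes A B :: "real^'n^'n"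
  assumes AB: "A ** B = mat 1"
  shows "matrix_inv A = B"
proof -
  have BA: "B ** A = mat 1" using AB matrix_left_right_inverse by blast
  let ?M = "matrix_inv A"
  have "A ** ?M = mat 1 \<and> ?M ** A = mat 1"
    unfolding matrix_inv_def by (rule someI[of _ B]) (use AB BA in auto)
  then have "B ** (A ** ?M) = B" by simp
  then show ?thesis by (simp add: matrix_mul_assoc BA)
qed

lemma nilpotent_neumann:
  fixes A :: "real^'n^'n"
  assumes "matpow A N = 0"
  shows "matrix_inv (mat 1 - A) = (\<Sum>n<N. matpow A n)"
  using geometric_matrix_sum[of A N] assms by (intro matrix_inv_eqI) simp

lemma visit_matrix_neumann:
  fixes P :: "real^'j::finite^'j"
  assumes "routing_matrix P"
  obtains N where "N > 0" "visit_matrix P = (\<Sum>n<N. matpow (transpose P) n)"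
proof -
  obtain N where N: "matpow P N = 0" using assms unfolding routing_matrix_def by blast
  have "transpose (0::real^'j^'j) = 0"
    by (simp add: transpose_def vec_eq_iff)
  then have "matpow (transpose P) N = 0"
    using N by (simp flip: matpow_transpose)
  then have V: "visit_matrix P = (\<Sum>n<N. matpow (transpose P) n)"
    unfolding visit_matrix_def by (rule nilpotent_neumann)
  have "N \<noteq> 0"
  proof
    assume "N = 0"
    then have "(mat 1 :: real^'j^'j) $ undefined $ undefined = 0" using N by simp
    then show False by (simp add: mat_def)
  qed
  with V that show ?thesis by blast
qed

lemma visit_matrix_nonneg:
  assumes "routing_matrix (P :: real^'j::finite^'j)"
  shows "visit_matrix P $ i $ j \<ge> 0" and "visit_matrix P $ i $ i \<ge> 1"
proof -
  obtain N where N: "N > 0" and V: "visit_matrix P = (\<Sum>n<N. matpow (transpose P) n)"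
    using visit_matrix_neumann[OF assms] by blast
  have P01: "transpose P $ i $ j \<ge> 0" for i j
    using assms unfolding routing_matrix_def transpose_def
    by (metis less_eq_real_def vec_lambda_beta zero_less_one)
  have V_entry: "visit_matrix P $ i $ j = (\<Sum>n<N. matpow (transpose P) n $ i $ j)" for i j
    by (simp add: V)
  show "visit_matrix P $ i $ j \<ge> 0"
    unfolding V_entry by (intro sum_nonneg matpow_nonneg P01)
  have "matpow (transpose P) 0 $ i $ i \<le> (\<Sum>n<N. matpow (transpose P) n $ i $ i)"
    using N by (intro member_le_sum matpow_nonneg P01) auto
  then show "visit_matrix P $ i $ i \<ge> 1"
    unfolding V_entry by (simp add: mat_def)
qed

lemma exp1_ge2: "exp 1 \<ge> (2::real)"
  using exp_ge_add_one_self[of 1] by simp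

lemma lnln_ge1:
  assumes "exp (exp 1) \<le> (x::real)"
  shows "exp 1 \<le> ln x" and "1 \<le> ln (ln x)"
proof -
  have "0 < x" using assms exp_gt_zero[of "exp 1"] by linarith
  then show "exp 1 \<le> ln x" using assms by (metis ln_exp ln_le_cancel_iff exp_gt_zero)
  then show "1 \<le> ln (ln x)"
    by (metis exp_gt_zero ln_exp ln_le_cancel_iff order_less_le_trans)
qed

lemma lnln_mono:
  assumes "exp 1 \<le> (a::real)" and "a \<le> b"
  shows "ln (ln a) \<le> ln (ln b)"
proof -
  have "a > 0" using assms(1) exp1_ge2 by linarith
  then have "ln a \<ge> 1" using assms(1) by (metis ln_exp ln_le_cancel_iff exp_gt_zero)
  moreover have "ln a \<le> ln b" using assms(2) \<open>a > 0\<close> by simp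
  ultimately show ?thesis by simp
qed

lemma lnln_sublinear:
  assumes a: "exp (exp 1) \<le> (a::real)" and az: "a \<le> z"
  shows "ln (ln z) \<le> z / a * ln (ln a)"
proof -
  define r where "r = z / a"
  have apos: "a > 0" using a exp_gt_zero[of "exp 1"] by linarith
  have r1: "r \<ge> 1" using az apos by (simp add: r_def)
  have la: "ln a \<ge> exp 1" and lla: "ln (ln a) \<ge> 1" using lnln_ge1[OF a] by auto
  have la_pos: "ln a > 0" using la exp1_ge2 by linarith
  have lnr: "0 \<le> ln r" "ln r \<le> r - 1" using r1 ln_le_minus_one[of r] by auto
  have "z = a * r" using apos by (simp add: r_def)
  then have "ln z = ln a + ln r" using apos r1 by (simp add: ln_mult)
  then have "ln z = ln a * (1 + ln r / ln a)"
    using la_pos by (simp add: distrib_left)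
  moreover have "1 + ln r / ln a > 0" using la_pos lnr by (simp add: add_pos_nonneg)
  ultimately have "ln (ln z) = ln (ln a) + ln (1 + ln r / ln a)"
    using la_pos by (simp add: ln_mult)
  also have "\<dots> \<le> ln (ln a) + (r - 1) / ln a"
    using ln_add_one_self_le_self[of "ln r / ln a"] lnr la_pos
    by (simp add: divide_right_mono order_trans)
  also have "\<dots> \<le> ln (ln a) + (r - 1) * ln (ln a)"
  proof -
    have "1 / ln a \<le> 1" using la exp1_ge2 by simp
    then have "1 / ln a \<le> ln (ln a)" using lla by linarith
    then show ?thesis using r1 mult_left_mono[of "1 / ln a" "ln (ln a)" "r - 1"] by simp
  qed
  finally show ?thesis by (simp add: r_def algebra_simps)
qed

lemma lnln_square_le:
  assumes c: "exp 1 \<le> (c::real)" and cZ: "c \<le> Z^2" and Z: "exp (exp 1) \<le> Z"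
  shows "ln (ln c) \<le> 2 * ln (ln Z)"
proof -
  have cpos: "c > 0" using c exp1_ge2 by linarith
  have lc: "ln c \<ge> 1" using c cpos by (metis ln_exp ln_le_cancel_iff exp_gt_zero)
  have Zpos: "Z > 0" using Z exp_gt_zero[of "exp 1"] by linarith
  have lZ: "ln Z \<ge> exp 1" and llZ: "ln (ln Z) \<ge> 1" using lnln_ge1[OF Z] by auto
  have "ln c \<le> ln (Z^2)" using cZ cpos by (subst ln_le_cancel_iff) auto
  also have "\<dots> = 2 * ln Z" using Zpos by (simp add: ln_realpow)
  finally have "ln c \<le> 2 * ln Z" .
  then have "ln (ln c) \<le> ln (2 * ln Z)" using lc by simp
  also have "\<dots> = ln 2 + ln (ln Z)" using lZ exp1_ge2 by (simp add: ln_mult)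
  also have "\<dots> \<le> 2 * ln (ln Z)" using llZ ln_le_minus_one[of 2] by simp
  finally show ?thesis .
qed

(* The estimate behind the affine majorant of phi: ln ln z is dominated either by
   the constant 4 ln ln c or by the linear function z/c. *)
lemma lnln_le_max:
  assumes c: "exp (exp 1) \<le> (c::real)" and z: "exp (exp 1) \<le> z"
  shows "ln (ln z) \<le> max (4 * ln (ln c)) (z / c)"
proof -
  define llc where "llc = ln (ln c)"
  define z1 where "z1 = 4 * c * llc"
  have cpos: "c > 0" using c exp_gt_zero[of "exp 1"] by linarith
  have lc: "exp 1 \<le> ln c" and llc: "1 \<le> llc" using lnln_ge1[OF c] by (auto simp: llc_def)
  have z1pos: "z1 > 0" using cpos llc by (simp add: z1_def)
  have c_z1: "c \<le> z1" using cpos llc by (simp add: z1_def)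
  have lnz1: "ln z1 = ln 4 + ln c + ln llc"
    using cpos llc by (simp add: z1_def ln_mult)
  have ln4: "ln (4::real) \<le> 2"
    using ln_le_minus_one[of 2] ln_mult[of 2 2] by simp
  have "ln llc \<le> llc" using ln_le_minus_one[of llc] llc by simp
  moreover have "llc \<le> ln c" using ln_le_minus_one[of "ln c"] lc exp1_ge2 by (simp add: llc_def)
  ultimately have lnz1_le: "ln z1 \<le> 3 * ln c" using lnz1 ln4 lc exp1_ge2 by simp
  have lnz1_pos: "ln z1 > 0" using lnz1 llc lc exp1_ge2 by (simp add: ln_ge_zero add_pos_nonneg)
  have llz1: "ln (ln z1) \<le> 4 * llc"
  proof -
    have "ln (ln z1) \<le> ln (3 * ln c)" using lnz1_le lnz1_pos by simp
    also have "\<dots> = ln 3 + llc" using lc exp1_ge2 by (simp add: llc_def ln_mult)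
    also have "\<dots> \<le> 4 * llc" using ln_le_minus_one[of 3] llc by simp
    finally show ?thesis .
  qed
  show ?thesis
  proof (cases "z \<le> z1")
    case True
    then have "ln (ln z) \<le> ln (ln z1)" using z exp_ge_add_one_self[of "exp 1"]
      by (intro lnln_mono) linarith+
    with llz1 show ?thesis by (simp add: llc_def)
  next
    case False
    then have "ln (ln z) \<le> z / z1 * ln (ln z1)"
      using c c_z1 by (intro lnln_sublinear) linarith+
    also have "\<dots> \<le> z / z1 * (4 * llc)"
      using llz1 z1pos False by (intro mult_left_mono) simp_all
    also have "\<dots> = z / c" using cpos llc by (simp add: z1_def)
    finally show ?thesis by simp
  qed
qed

lemma phi_nonneg: "phi x \<ge> 0"
proof (cases "exp (exp 1) \<le> x")
  case True
  then have "x \<ge> 0" using exp_gt_zero[of "exp 1"] by linarith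
  moreover have "ln (ln x) \<ge> 0" using lnln_ge1[OF True] by simp
  ultimately show ?thesis using True by (simp add: phi_def)
qed (simp add: phi_def)

definition phi_intercept :: "real \<Rightarrow> real" where
  "phi_intercept \<delta> = ln (ln (1 / \<delta>^2)) / \<delta>"

lemma phi_intercept_ge:
  assumes "\<delta> > 0" and "exp (exp 1) \<le> 1 / \<delta>^2"
  shows "phi_intercept \<delta> \<ge> 1 / \<delta>"
  using lnln_ge1(2)[OF assms(2)] assms(1) by (simp add: phi_intercept_def divide_right_mono)

lemma phi_le_affine:
  assumes d: "\<delta> > 0" and c: "exp (exp 1) \<le> 1 / \<delta>^2" and z: "z \<ge> 0"
  shows "phi z \<le> \<delta> * z + phi_intercept \<delta>"
proof (cases "exp (exp 1) \<le> z")
  case False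
  have "1 \<le> exp (exp (1::real))" by simp
  then have "\<delta>^2 \<le> exp (exp 1) * \<delta>^2"
    using mult_right_mono[of 1 "exp (exp 1)" "\<delta>^2"] by simp
  also have "\<dots> \<le> 1" using c d by (simp add: le_divide_eq)
  finally have "\<delta>^2 \<le> 1" .
  then have "1 \<le> 1 / \<delta>" using d by (simp add: power_le_one_iff)
  then have "1 \<le> phi_intercept \<delta>" using phi_intercept_ge[OF d c] by linarith
  moreover have "0 \<le> \<delta> * z" using d z by simp
  ultimately show ?thesis using False by (simp add: phi_def)
next
  case True
  define l where "l = ln (ln (1 / \<delta>^2))"
  have l: "l \<ge> 1" using lnln_ge1(2)[OF c] by (simp add: l_def)
  have zpos: "z > 0" using True exp_gt_zero[of "exp 1"] by linarith
  have "z * ln (ln z) \<le> z * max (4 * l) (\<delta>^2 * z)"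
    using lnln_le_max[OF c True] zpos by (simp add: l_def mult.commute)
  also have "\<dots> \<le> (\<delta> * z + l / \<delta>)^2"
  proof -
    have "(\<delta> * z + l / \<delta>)^2 - z * (4 * l) = (\<delta> * z - l / \<delta>)^2"
      using d by (simp add: power2_eq_square field_simps)
    then have "z * (4 * l) \<le> (\<delta> * z + l / \<delta>)^2"
      using zero_le_power2[of "\<delta> * z - l / \<delta>"] by linarith
    moreover have "z * (\<delta>^2 * z) \<le> (\<delta> * z + l / \<delta>)^2"
      using d zpos l power_mono[of "\<delta> * z" "\<delta> * z + l / \<delta>" 2]
      by (simp add: power2_eq_square mult_ac)
    ultimately show ?thesis by (simp add: max_def)
  qed
  finally have "sqrt (z * ln (ln z)) \<le> \<delta> * z + l / \<delta>"
    using d zpos l by (intro real_le_lsqrt) simp_all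
  then show ?thesis using True by (simp add: phi_def phi_intercept_def l_def)
qed

(* Comparison of the iterated logarithms arising from the two slopes used below
   (x plays the role of lambda_max * Gamma, s of 1 - rho) with the single
   logarithm lnln((4J+3) x^2/s) appearing in the theorem. *)
lemma lnln_constant_estimates:
  fixes x s J :: real
  assumes x: "exp (exp 1) \<le> x" and s: "0 < s" "s \<le> 1" and J: "J \<ge> 1"
  defines "Z \<equiv> (4 * J + 3) * x^2 / s"
  shows "exp (exp 1) \<le> 4 * x^2" and "exp (exp 1) \<le> 16 * (J + 1)^2 * x^2 / s^2"
    and "ln (ln (4 * x^2)) \<le> ln (ln Z)"
    and "ln (ln (16 * (J + 1)^2 * x^2 / s^2)) \<le> 2 * ln (ln Z)"
    and "1 \<le> ln (ln Z)" and "ln (ln Z) \<le> ln (ln (2 * Z))"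
proof -
  have e: "exp 1 \<le> exp (exp (1::real))" using exp_ge_add_one_self[of "exp 1"] by linarith
  have x_ge2: "x \<ge> 2" using x e exp1_ge2 by linarith
  have x_le_x2: "x \<le> x^2" using x_ge2 by (simp add: power2_eq_square)
  have s2: "0 < s^2" "s^2 \<le> 1" using s by (simp_all add: power_le_one)
  have x2_le_4x2: "x^2 \<le> 4 * x^2" by simp
  have Z_ge: "4 * x^2 \<le> Z"
  proof -
    have "4 * x^2 \<le> (4 * J + 3) * x^2" using J by (intro mult_right_mono) simp_all
    also have "\<dots> \<le> Z" using s J unfolding Z_def by (simp add: le_divide_eq mult_left_le)
    finally show ?thesis .
  qed
  show ee4: "exp (exp 1) \<le> 4 * x^2" using x x_le_x2 x2_le_4x2 by linarith
  have ZE: "exp (exp 1) \<le> Z" using ee4 Z_ge by linarith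
  have c2_ge: "x^2 \<le> 16 * (J + 1)^2 * x^2 / s^2"
  proof -
    have "1 \<le> 16 * (J + 1)^2" using J one_le_power[of "J + 1" 2] by linarith
    then have "x^2 \<le> 16 * (J + 1)^2 * x^2" by (simp add: mult_le_cancel_right1)
    also have "\<dots> \<le> 16 * (J + 1)^2 * x^2 / s^2" using s2 by (simp add: le_divide_eq mult_left_le)
    finally show ?thesis .
  qed
  then show ee2: "exp (exp 1) \<le> 16 * (J + 1)^2 * x^2 / s^2" using x x_le_x2 by linarith
  show "ln (ln (4 * x^2)) \<le> ln (ln Z)" using ee4 e Z_ge by (intro lnln_mono) linarith+
  show "1 \<le> ln (ln Z)" using lnln_ge1(2)[OF ZE] .
  show "ln (ln Z) \<le> ln (ln (2 * Z))" using ZE e exp_gt_zero[of "exp 1"] by (intro lnln_mono) linarith+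
  have "16 * (J + 1)^2 * x^2 / s^2 \<le> Z^2"
  proof -
    have "16 * (J + 1)^2 \<le> 2 * (4 * J + 3)^2" using J by (simp add: power2_eq_square algebra_simps)
    also have "\<dots> \<le> x^2 * (4 * J + 3)^2" using x_ge2 x_le_x2 by (intro mult_right_mono) simp_all
    finally have "16 * (J + 1)^2 * x^2 \<le> x^2 * (4 * J + 3)^2 * x^2"
      by (rule mult_right_mono) simp
    also have "\<dots> = ((4 * J + 3) * x^2)^2" by (simp add: power2_eq_square)
    finally have "16 * (J + 1)^2 * x^2 \<le> ((4 * J + 3) * x^2)^2" .
    then show ?thesis using s2 by (simp add: Z_def power_divide divide_right_mono)
  qed
  then show "ln (ln (16 * (J + 1)^2 * x^2 / s^2)) \<le> 2 * ln (ln Z)"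
    using ee2 e ZE by (intro lnln_square_le) linarith+
qed

(* Closed-form bound for the busy-period length 2E/(1-rho), divided by Gamma. *)
lemma busy_period_constant_le:
  fixes x s J :: real
  assumes x: "exp (exp 1) \<le> x" and s: "0 < s" "s \<le> 1" and J: "J \<ge> 1"
  shows "2 * x * ln (ln (4 * x^2)) + 8 * (J + 1)^2 * x / s^2 * ln (ln (16 * (J + 1)^2 * x^2 / s^2))
    \<le> 5 * (4 * J + 3)^2 * x^3 / s^2 * ln (ln (2 * (4 * J + 3) * x^2 / s))"
proof -
  define l where "l = ln (ln (2 * ((4 * J + 3) * x^2 / s)))"
  note est = lnln_constant_estimates[OF x s J]
  have l1: "1 \<le> l" using est(5,6) by (simp add: l_def)
  have xpos: "0 < x" using x exp_gt_zero[of "exp 1"] by linarith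
  have x1: "1 \<le> x^2" using x exp_ge_add_one_self[of "exp 1"] exp1_ge2 one_le_power[of x 2]
    by linarith
  have s2: "0 < s^2" "s^2 \<le> 1" using s by (simp_all add: power_le_one)
  have "2 * x * ln (ln (4 * x^2)) \<le> 2 * x * l / s^2"
  proof -
    have "2 * x * ln (ln (4 * x^2)) \<le> 2 * x * l"
      using est(3,6) xpos by (intro mult_left_mono) (simp_all add: l_def)
    also have "\<dots> \<le> 2 * x * l / s^2" using s2 xpos l1 by (simp add: le_divide_eq mult_le_cancel_left1)
    finally show ?thesis .
  qed
  moreover have "8 * (J + 1)^2 * x / s^2 * ln (ln (16 * (J + 1)^2 * x^2 / s^2))
      \<le> 8 * (J + 1)^2 * x / s^2 * (2 * l)"
    using est(4,6) xpos s2 by (intro mult_left_mono) (simp_all add: l_def)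
  ultimately have "2 * x * ln (ln (4 * x^2)) + 8 * (J + 1)^2 * x / s^2 * ln (ln (16 * (J + 1)^2 * x^2 / s^2))
      \<le> (2 + 16 * (J + 1)^2) * (x * l / s^2)"
    by (simp add: algebra_simps)
  also have "\<dots> \<le> 5 * (4 * J + 3)^2 * x^2 * (x * l / s^2)"
  proof (rule mult_right_mono)
    have "2 + 16 * (J + 1)^2 \<le> 5 * (4 * J + 3)^2" using J by (simp add: power2_eq_square algebra_simps)
    also have "\<dots> \<le> 5 * (4 * J + 3)^2 * x^2" using x1 by (simp add: mult_le_cancel_left1)
    finally show "2 + 16 * (J + 1)^2 \<le> 5 * (4 * J + 3)^2 * x^2" .
  qed (use xpos l1 s2 in simp)
  also have "\<dots> = 5 * (4 * J + 3)^2 * x^3 / s^2 * ln (ln (2 * (4 * J + 3) * x^2 / s))"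
    by (simp add: l_def power2_eq_square power3_eq_cube mult_ac)
  finally show ?thesis .
qed

(* Closed-form bound for the workload offset E, divided by Gamma. *)
lemma workload_constant_le:
  fixes x s J :: real
  assumes x: "exp (exp 1) \<le> x" and s: "0 < s" "s \<le> 1" and J: "J \<ge> 1"
  shows "s * x * ln (ln (4 * x^2)) + 4 * (J + 1)^2 * x / s * ln (ln (16 * (J + 1)^2 * x^2 / s^2))
    \<le> 2 * (4 * J + 3)^2 * x^3 / s * ln (ln ((4 * J + 3) * x^2 / s))"
proof -
  define l where "l = ln (ln ((4 * J + 3) * x^2 / s))"
  note est = lnln_constant_estimates[OF x s J]
  have l1: "1 \<le> l" using est(5) by (simp add: l_def)
  have xpos: "0 < x" using x exp_gt_zero[of "exp 1"] by linarith
  have x1: "1 \<le> x^2" using x exp_ge_add_one_self[of "exp 1"] exp1_ge2 one_le_power[of x 2]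
    by linarith
  have "s * x * ln (ln (4 * x^2)) \<le> x * l / s"
  proof -
    have "s * x * ln (ln (4 * x^2)) \<le> 1 * x * l"
      using est(1,3) lnln_ge1(2)[OF est(1)] s xpos
      by (intro mult_mono) (simp_all add: l_def)
    also have "\<dots> \<le> x * l / s" using s xpos l1 by (simp add: le_divide_eq mult_le_cancel_left1)
    finally show ?thesis .
  qed
  moreover have "4 * (J + 1)^2 * x / s * ln (ln (16 * (J + 1)^2 * x^2 / s^2))
      \<le> 4 * (J + 1)^2 * x / s * (2 * l)"
    using est(4) xpos s by (intro mult_left_mono) (simp_all add: l_def)
  ultimately have "s * x * ln (ln (4 * x^2)) + 4 * (J + 1)^2 * x / s * ln (ln (16 * (J + 1)^2 * x^2 / s^2))
      \<le> (1 + 8 * (J + 1)^2) * (x * l / s)"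
    by (simp add: algebra_simps)
  also have "\<dots> \<le> 2 * (4 * J + 3)^2 * x^2 * (x * l / s)"
  proof (rule mult_right_mono)
    have "1 + 8 * (J + 1)^2 \<le> 2 * (4 * J + 3)^2" using J by (simp add: power2_eq_square algebra_simps)
    also have "\<dots> \<le> 2 * (4 * J + 3)^2 * x^2" using x1 by (simp add: mult_le_cancel_left1)
    finally show "1 + 8 * (J + 1)^2 \<le> 2 * (4 * J + 3)^2 * x^2" .
  qed (use xpos l1 s in simp)
  also have "\<dots> = 2 * (4 * J + 3)^2 * x^3 / s * ln (ln ((4 * J + 3) * x^2 / s))"
    by (simp add: l_def power2_eq_square power3_eq_cube mult_ac)
  finally show ?thesis .
qed

lemma affine_self_bound:
  fixes n l t g f d D :: real
  assumes n: "0 \<le> n" and rate: "n \<le> l * (t + g * f)" and f: "f \<le> d * n + D"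
    and small: "g * d * l \<le> 1/2" and g: "0 \<le> g" and l: "0 < l"
  shows "n \<le> 2 * l * (t + g * D)"
proof -
  have "n \<le> l * (t + g * (d * n + D))"
    using rate f g l by (meson add_left_mono mult_left_mono order_trans less_imp_le)
  also have "\<dots> = l * t + (g * d * l) * n + l * g * D" by (simp add: algebra_simps)
  also have "\<dots> \<le> l * t + 1/2 * n + l * g * D"
    using mult_right_mono[OF small n] by simp
  finally show ?thesis by (simp add: algebra_simps)
qed

lemma arr_partial_sum_le:
  assumes "0 \<le> t" and bounded: "\<And>n. (\<Sum>i=1..n. U j i) \<le> t \<Longrightarrow> n \<le> b"
  shows "(\<Sum>i=1..arr U j t. U j i) \<le> t"
proof -
  have "(\<lambda>k. (\<Sum>i=1..k. U j i) \<le> t) (GREATEST k. (\<Sum>i=1..k. U j i) \<le> t)"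
    by (rule GreatestI_nat[where k = 0 and b = b]) (use assms in auto)
  then show ?thesis by (simp add: arr_def)
qed

(* The hypotheses of the theorem on the queue. *)
locale mcss =
  fixes P :: "real^'j::finite^'j"
    and U V :: "'j \<Rightarrow> nat \<Rightarrow> real"
    and lam mu :: "real^'j"
    and Ga Gs :: "'j \<Rightarrow> real"
  assumes routing: "routing_matrix P"
    and lam_pos: "\<And>j. lam $ j > 0"
    and mu_pos: "\<And>j. mu $ j > 0"
    and rho_lt1: "(\<Sum>j\<in>UNIV. (visit_matrix P *v lam) $ j / mu $ j) < 1"
    and Ga_nonneg: "\<And>j. Ga j \<ge> 0"
    and arr_bd: "\<And>j k. k \<ge> 1 \<Longrightarrow>
        \<bar>(\<Sum>i=1..k. U j i) - real k / lam $ j\<bar> \<le> Ga j * phi (real k)"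
    and srv_bd: "\<And>j k. k \<ge> 1 \<Longrightarrow>
        \<bar>(\<Sum>i=1..k. V j i) - real k / mu $ j\<bar> \<le> Gs j * phi (real k)"
    and Gamma_large: "(MIN j. lam $ j) * (MAX j. max (Ga j) (Gs j)) \<ge> exp (2 * exp 1)"
begin

definition Gam :: real where "Gam = (MAX j. max (Ga j) (Gs j))"
definition lbar_max :: real where "lbar_max = (MAX j. (visit_matrix P *v lam) $ j)"
definition rho :: real where "rho = (\<Sum>j\<in>UNIV. (visit_matrix P *v lam) $ j / mu $ j)"

lemma Ga_le_Gam: "Ga j \<le> Gam" and Gs_le_Gam: "Gs j \<le> Gam"
proof -
  have "max (Ga j) (Gs j) \<le> Gam" unfolding Gam_def by (rule Max_ge) auto
  then show "Ga j \<le> Gam" "Gs j \<le> Gam" by auto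
qed

lemma lbar_eq: "(visit_matrix P *v lam) $ j = (\<Sum>i\<in>UNIV. visit_matrix P $ j $ i * lam $ i)"
  by (simp add: matrix_vector_mult_def)

(* Routing only adds arrivals, so lambda_j <= bar lambda_j <= bar lambda_max. *)
lemma lam_le_lbar: "lam $ j \<le> (visit_matrix P *v lam) $ j"
proof -
  have "lam $ j \<le> visit_matrix P $ j $ j * lam $ j"
    using visit_matrix_nonneg(2)[OF routing, of j] lam_pos[of j] by simp
  also have "\<dots> \<le> (\<Sum>i\<in>UNIV. visit_matrix P $ j $ i * lam $ i)"
    using visit_matrix_nonneg(1)[OF routing] lam_pos
    by (intro member_le_sum mult_nonneg_nonneg) (auto intro: less_imp_le)
  finally show ?thesis by (simp add: lbar_eq)
qed

lemma lbar_le_max: "(visit_matrix P *v lam) $ j \<le> lbar_max"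
  unfolding lbar_max_def by (rule Max_ge) auto

lemma lam_le_lbar_max: "lam $ j \<le> lbar_max"
  using lam_le_lbar lbar_le_max by (rule order_trans)

lemma rho_bounds: "0 < 1 - rho" "1 - rho \<le> 1"
proof -
  have "0 \<le> (visit_matrix P *v lam) $ j / mu $ j" for j
    using lam_le_lbar[of j] lam_pos[of j] mu_pos[of j] by simp
  then have "0 \<le> rho" unfolding rho_def by (rule sum_nonneg)
  then show "1 - rho \<le> 1" by simp
  show "0 < 1 - rho" using rho_lt1 by (simp add: rho_def)
qed

lemma load_large: "exp (exp 1) \<le> lbar_max * Gam" and Gam_pos: "0 < Gam"
  and lbar_max_pos: "0 < lbar_max"
proof -
  have "(MIN j. lam $ j) \<in> range (\<lambda>j. lam $ j)" by (rule Min_in) auto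
  then obtain j0 :: 'j where "(MIN j. lam $ j) = lam $ j0" by (metis rangeE)
  then have min_le: "(MIN j. lam $ j) \<le> lbar_max" using lam_le_lbar_max by simp
  have "0 \<le> Gam" using Ga_nonneg[of j0] Ga_le_Gam[of j0] by linarith
  then have "exp (2 * exp 1) \<le> lbar_max * Gam"
    using Gamma_large min_le by (metis Gam_def mult_right_mono order_trans)
  moreover have "exp (exp 1) \<le> exp (2 * exp (1::real))" by simp
  ultimately show "exp (exp 1) \<le> lbar_max * Gam" by linarith
  show "0 < lbar_max" using lam_le_lbar_max[of j0] lam_pos[of j0] by linarith
  with \<open>0 \<le> Gam\<close> \<open>exp (2 * exp 1) \<le> lbar_max * Gam\<close> show "0 < Gam"
    by (metis exp_gt_zero less_eq_real_def mult_zero_right not_less)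
qed

(* The two slopes used in the affine majorant of phi: d_arr controls the arrival
   counts, d_srv the service fluctuations. *)
definition d_arr :: real where "d_arr = 1 / (2 * lbar_max * Gam)"
definition d_srv :: real where
  "d_srv = (1 - rho) / (4 * Gam * (real CARD('j) + 1) * lbar_max)"

lemma card_ge1: "1 \<le> real CARD('j)"
  by (simp add: Suc_le_eq)

lemma d_arr_props: "0 < d_arr" "exp (exp 1) \<le> 1 / d_arr^2"
  and d_arr_small: "Gam * d_arr * lam $ i \<le> 1/2"
proof -
  show "0 < d_arr" using Gam_pos lbar_max_pos by (simp add: d_arr_def)
  have "1 / d_arr^2 = 4 * (lbar_max * Gam)^2" by (simp add: d_arr_def power2_eq_square)
  then show "exp (exp 1) \<le> 1 / d_arr^2"
    using lnln_constant_estimates(1)[OF load_large rho_bounds card_ge1] by simp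
  have "Gam * d_arr * lam $ i = lam $ i / (2 * lbar_max)"
    using Gam_pos by (simp add: d_arr_def)
  also have "\<dots> \<le> lbar_max / (2 * lbar_max)"
    using lam_le_lbar_max[of i] lbar_max_pos by (simp add: divide_right_mono)
  finally show "Gam * d_arr * lam $ i \<le> 1/2" using lbar_max_pos by simp
qed

lemma d_srv_inverse:
  "1 / d_srv = 4 * (real CARD('j) + 1) * (lbar_max * Gam) / (1 - rho)"
  "1 / d_srv^2 = 16 * (real CARD('j) + 1)^2 * (lbar_max * Gam)^2 / (1 - rho)^2"
  by (simp_all add: d_srv_def power2_eq_square)

lemma d_srv_props: "0 < d_srv" "exp (exp 1) \<le> 1 / d_srv^2"
proof -
  show "0 < d_srv" using Gam_pos lbar_max_pos rho_bounds by (simp add: d_srv_def)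
  show "exp (exp 1) \<le> 1 / d_srv^2"
    unfolding d_srv_inverse using lnln_constant_estimates(2)[OF load_large rho_bounds card_ge1] .
qed

lemma phi_intercept_d_arr:
  "phi_intercept d_arr = 2 * (lbar_max * Gam) * ln (ln (4 * (lbar_max * Gam)^2))"
  by (simp add: phi_intercept_def d_arr_def power2_eq_square mult_ac)

lemma phi_intercept_d_srv:
  "phi_intercept d_srv = 4 * (real CARD('j) + 1) * (lbar_max * Gam) / (1 - rho)
     * ln (ln (16 * (real CARD('j) + 1)^2 * (lbar_max * Gam)^2 / (1 - rho)^2))"
  using d_srv_inverse by (simp add: phi_intercept_def divide_inverse mult.commute)

lemma arrivals_le_rate:
  assumes sum_le: "(\<Sum>k=1..n. U i k) \<le> t" and t: "0 \<le> t"
  shows "real n \<le> lam $ i * (t + Gam * phi (real n))"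
proof (cases "n = 0")
  case True
  then show ?thesis using t lam_pos[of i] Gam_pos phi_nonneg[of 0] by simp
next
  case False
  then have "\<bar>(\<Sum>k=1..n. U i k) - real n / lam $ i\<bar> \<le> Ga i * phi (real n)"
    by (intro arr_bd) simp
  moreover have "Ga i * phi (real n) \<le> Gam * phi (real n)"
    using Ga_le_Gam[of i] phi_nonneg by (rule mult_right_mono)
  ultimately have "real n / lam $ i \<le> t + Gam * phi (real n)" using sum_le by linarith
  then show ?thesis using lam_pos[of i] by (simp add: divide_le_eq mult.commute)
qed

(* Linear time scale with A_i(t) <= lambda_i * arrival_scale t (lemma arr_le_scale). *)
definition arrival_scale :: "real \<Rightarrow> real" where
  "arrival_scale t = 2 * (t + Gam * phi_intercept d_arr)"

lemma intercepts_nonneg: "0 \<le> phi_intercept d_arr" "0 \<le> phi_intercept d_srv"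
  using phi_intercept_ge[OF d_arr_props] phi_intercept_ge[OF d_srv_props]
    d_arr_props(1) d_srv_props(1)
  by (meson less_eq_real_def order_trans zero_less_divide_1_iff)+

lemma arrival_scale_nonneg: "0 \<le> t \<Longrightarrow> 0 \<le> arrival_scale t"
  using Gam_pos intercepts_nonneg by (simp add: arrival_scale_def)

lemma arrivals_le_scale:
  assumes "(\<Sum>k=1..n. U i k) \<le> t" and "0 \<le> t"
  shows "real n \<le> lam $ i * arrival_scale t"
  using affine_self_bound[OF _ arrivals_le_rate[OF assms]
      phi_le_affine[OF d_arr_props, of "real n"] d_arr_small]
    Gam_pos lam_pos[of i]
  by (simp add: arrival_scale_def mult_ac)

lemma arr_le_scale:
  assumes "0 \<le> t"
  shows "(\<Sum>k=1..arr U i t. U i k) \<le> t" and "real (arr U i t) \<le> lam $ i * arrival_scale t"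
proof -
  show sum_le: "(\<Sum>k=1..arr U i t. U i k) \<le> t"
  proof (rule arr_partial_sum_le[OF assms])
    fix n assume "(\<Sum>k=1..n. U i k) \<le> t"
    from arrivals_le_scale[OF this assms]
    show "n \<le> nat \<lceil>lam $ i * arrival_scale t\<rceil>" by linarith
  qed
  show "real (arr U i t) \<le> lam $ i * arrival_scale t"
    by (rule arrivals_le_scale[OF sum_le assms])
qed

definition phi_cap :: "real \<Rightarrow> real" where
  "phi_cap t = d_srv * (lbar_max * arrival_scale t) + phi_intercept d_srv"

lemma phi_le_cap:
  assumes "0 \<le> z" and "z \<le> lbar_max * arrival_scale t"
  shows "phi z \<le> phi_cap t"
proof -
  have "phi z \<le> d_srv * z + phi_intercept d_srv"
    by (rule phi_le_affine[OF d_srv_props assms(1)])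
  also have "\<dots> \<le> phi_cap t"
    using assms(2) d_srv_props(1) by (simp add: phi_cap_def)
  finally show ?thesis .
qed

lemma arr_le_fine:
  assumes t: "0 \<le> t"
  shows "real (arr U i t) \<le> lam $ i * (t + Gam * phi_cap t)"
proof -
  have "real (arr U i t) \<le> lbar_max * arrival_scale t"
    using arr_le_scale(2)[OF t] lam_le_lbar_max[of i] arrival_scale_nonneg[OF t]
    by (meson mult_right_mono order_trans)
  then have "phi (real (arr U i t)) \<le> phi_cap t" by (intro phi_le_cap) simp_all
  then show ?thesis
    using arrivals_le_rate[OF arr_le_scale(1)[OF t] t] Gam_pos lam_pos[of i]
    by (smt (verit) mult_left_mono)
qed

lemma tot_arr_eq:
  "tot_arr P U t $ j = (\<Sum>i\<in>UNIV. visit_matrix P $ j $ i * real (arr U i t))"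
  by (simp add: tot_arr_def arr_vec_def matrix_vector_mult_def)

lemma tot_arr_bounds:
  assumes t: "0 \<le> t"
  shows "0 \<le> tot_arr P U t $ j" and "tot_arr P U t $ j \<le> lbar_max * arrival_scale t"
proof -
  note V_nonneg = visit_matrix_nonneg(1)[OF routing]
  show "0 \<le> tot_arr P U t $ j"
    unfolding tot_arr_eq using V_nonneg by (intro sum_nonneg) simp
  have "tot_arr P U t $ j \<le> (\<Sum>i\<in>UNIV. visit_matrix P $ j $ i * (lam $ i * arrival_scale t))"
    unfolding tot_arr_eq using arr_le_scale(2)[OF t] V_nonneg
    by (intro sum_mono mult_left_mono) simp_all
  also have "\<dots> = (visit_matrix P *v lam) $ j * arrival_scale t"
    by (simp add: lbar_eq sum_distrib_right mult.assoc)
  also have "\<dots> \<le> lbar_max * arrival_scale t"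
    using lbar_le_max arrival_scale_nonneg[OF t] by (rule mult_right_mono)
  finally show "tot_arr P U t $ j \<le> lbar_max * arrival_scale t" .
qed

lemma served_work_le:
  assumes t: "0 \<le> t"
  shows "(\<Sum>k=1..nat \<lfloor>tot_arr P U t $ j\<rfloor>. V j k) \<le> tot_arr P U t $ j / mu $ j + Gam * phi_cap t"
proof -
  define n where "n = nat \<lfloor>tot_arr P U t $ j\<rfloor>"
  have n_le: "real n \<le> tot_arr P U t $ j" using tot_arr_bounds(1)[OF t, of j] by (simp add: n_def)
  have phi_n: "phi (real n) \<le> phi_cap t"
    using n_le tot_arr_bounds(2)[OF t, of j] by (intro phi_le_cap) simp_all
  have "(\<Sum>k=1..n. V j k) \<le> real n / mu $ j + Gam * phi (real n)"
  proof (cases "n = 0")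
    case True
    then show ?thesis using Gam_pos phi_nonneg[of 0] by simp
  next
    case False
    then have "\<bar>(\<Sum>k=1..n. V j k) - real n / mu $ j\<bar> \<le> Gs j * phi (real n)"
      by (intro srv_bd) simp
    moreover have "Gs j * phi (real n) \<le> Gam * phi (real n)"
      using Gs_le_Gam[of j] phi_nonneg by (rule mult_right_mono)
    ultimately show ?thesis by linarith
  qed
  also have "\<dots> \<le> tot_arr P U t $ j / mu $ j + Gam * phi_cap t"
    using n_le mu_pos[of j] phi_n Gam_pos
    by (intro add_mono divide_right_mono mult_left_mono) simp_all
  finally show ?thesis by (simp add: n_def)
qed

lemma offered_work_le:
  assumes t: "0 \<le> t"
  shows "(\<Sum>j\<in>UNIV. tot_arr P U t $ j / mu $ j) \<le> rho * (t + Gam * phi_cap t)"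
proof -
  have "(\<Sum>j\<in>UNIV. tot_arr P U t $ j / mu $ j)
      \<le> (\<Sum>j\<in>UNIV. (\<Sum>i\<in>UNIV. visit_matrix P $ j $ i * (lam $ i * (t + Gam * phi_cap t))) / mu $ j)"
    unfolding tot_arr_eq using visit_matrix_nonneg(1)[OF routing] arr_le_fine[OF t] mu_pos
    by (intro sum_mono divide_right_mono mult_left_mono) (simp_all add: less_imp_le)
  also have "\<dots> = rho * (t + Gam * phi_cap t)"
    by (simp add: rho_def lbar_eq sum_distrib_right mult.assoc)
  finally show ?thesis .
qed

definition workload_offset :: real where
  "workload_offset = (1 - rho) * Gam * phi_intercept d_arr / 2
     + (real CARD('j) + 1) * Gam * phi_intercept d_srv"

lemma workload_le:
  assumes t: "0 \<le> t"
  shows "workload P U V t \<le> - (1 - rho) * t / 2 + workload_offset"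
proof -
  define J where "J = real CARD('j)"
  have cap_nonneg: "0 \<le> Gam * phi_cap t"
    using Gam_pos d_srv_props(1) lbar_max_pos arrival_scale_nonneg[OF t] intercepts_nonneg
    by (simp add: phi_cap_def)
  have "workload P U V t \<le> (\<Sum>j\<in>UNIV. tot_arr P U t $ j / mu $ j + Gam * phi_cap t) - t"
    unfolding workload_def using served_work_le[OF t] by (simp add: sum_mono)
  also have "\<dots> = (\<Sum>j\<in>UNIV. tot_arr P U t $ j / mu $ j) + J * (Gam * phi_cap t) - t"
    by (simp add: sum.distrib J_def)
  also have "\<dots> \<le> rho * (t + Gam * phi_cap t) + J * (Gam * phi_cap t) - t"
    using offered_work_le[OF t] by simp
  also have "\<dots> \<le> - (1 - rho) * t + (J + 1) * (Gam * phi_cap t)"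
    using rho_bounds cap_nonneg mult_right_mono[of rho 1 "Gam * phi_cap t"]
    by (simp add: algebra_simps)
  also have "\<dots> = - (1 - rho) * t / 2 + workload_offset"
  proof -
    have "(J + 1) * (Gam * phi_cap t)
        = ((J + 1) * Gam * d_srv * lbar_max) * arrival_scale t + (J + 1) * Gam * phi_intercept d_srv"
      by (simp add: phi_cap_def algebra_simps)
    also have "(J + 1) * Gam * d_srv * lbar_max = (1 - rho) / 4"
      using Gam_pos lbar_max_pos by (simp add: d_srv_def J_def)
    finally have "(J + 1) * (Gam * phi_cap t)
        = (1 - rho) / 4 * arrival_scale t + (J + 1) * Gam * phi_intercept d_srv" .
    then show ?thesis
      unfolding arrival_scale_def workload_offset_def J_def by (simp add: field_simps)
  qed
  finally show ?thesis .
qed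

lemma workload_le_offset:
  assumes t: "0 \<le> t"
  shows "workload P U V t \<le> workload_offset"
proof -
  have "0 \<le> (1 - rho) * t" using rho_bounds t by simp
  then show ?thesis using workload_le[OF t] by linarith
qed

lemma workload_offset_nonneg: "0 \<le> workload_offset"
  using rho_bounds Gam_pos intercepts_nonneg by (simp add: workload_offset_def)

lemma workload_offset_le:
  defines "J \<equiv> real CARD('j)"
  shows "workload_offset \<le> 2 * (4 * J + 3)^2 * lbar_max^3 * Gam^4 / (1 - rho)
      * ln (ln ((4 * J + 3) * lbar_max^2 * Gam^2 / (1 - rho)))"
proof -
  define x where "x = lbar_max * Gam"
  define s where "s = 1 - rho"
  define a where "a = ln (ln (4 * x^2))"
  define b where "b = ln (ln (16 * (J + 1)^2 * x^2 / s^2))"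
  have J1: "1 \<le> J" using card_ge1 by (simp add: J_def)
  have s: "0 < s" "s \<le> 1" using rho_bounds by (simp_all add: s_def)
  have "workload_offset = s * Gam * (2 * x * a) / 2 + (J + 1) * Gam * (4 * (J + 1) * x / s * b)"
    by (simp add: workload_offset_def phi_intercept_d_arr phi_intercept_d_srv
        x_def s_def a_def b_def J_def)
  also have "\<dots> = Gam * (s * x * a + 4 * (J + 1)^2 * x / s * b)"
    by (simp add: power2_eq_square algebra_simps)
  also have "\<dots> \<le> Gam * (2 * (4 * J + 3)^2 * x^3 / s * ln (ln ((4 * J + 3) * x^2 / s)))"
    using workload_constant_le[OF load_large[folded x_def] s J1] Gam_pos
    by (intro mult_left_mono) (simp_all add: a_def b_def)
  also have "\<dots> = 2 * (4 * J + 3)^2 * lbar_max^3 * Gam^4 / (1 - rho)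
      * ln (ln ((4 * J + 3) * lbar_max^2 * Gam^2 / (1 - rho)))"
    by (simp add: x_def s_def power_mult_distrib power3_eq_cube power4_eq_xxxx mult_ac)
  finally show ?thesis .
qed

lemma busy_time_le:
  defines "J \<equiv> real CARD('j)"
  shows "2 * workload_offset / (1 - rho) \<le> 5 * (4 * J + 3)^2 * lbar_max^3 * Gam^4 / (1 - rho)^2
      * ln (ln (2 * (4 * J + 3) * lbar_max^2 * Gam^2 / (1 - rho)))"
proof -
  define x where "x = lbar_max * Gam"
  define s where "s = 1 - rho"
  define a where "a = ln (ln (4 * x^2))"
  define b where "b = ln (ln (16 * (J + 1)^2 * x^2 / s^2))"
  have J1: "1 \<le> J" using card_ge1 by (simp add: J_def)
  have s: "0 < s" "s \<le> 1" using rho_bounds by (simp_all add: s_def)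
  have "2 * workload_offset / (1 - rho)
      = 2 * (s * Gam * (2 * x * a) / 2 + (J + 1) * Gam * (4 * (J + 1) * x / s * b)) / s"
    by (simp add: workload_offset_def phi_intercept_d_arr phi_intercept_d_srv
        x_def s_def a_def b_def J_def)
  also have "\<dots> = Gam * (2 * x * a + 8 * (J + 1)^2 * x / s^2 * b)"
    using s by (simp add: power2_eq_square field_simps)
  also have "\<dots> \<le> Gam * (5 * (4 * J + 3)^2 * x^3 / s^2 * ln (ln (2 * (4 * J + 3) * x^2 / s)))"
    using busy_period_constant_le[OF load_large[folded x_def] s J1] Gam_pos
    by (intro mult_left_mono) (simp_all add: a_def b_def)
  also have "\<dots> = 5 * (4 * J + 3)^2 * lbar_max^3 * Gam^4 / (1 - rho)^2
      * ln (ln (2 * (4 * J + 3) * lbar_max^2 * Gam^2 / (1 - rho)))"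
    by (simp add: x_def s_def power_mult_distrib power3_eq_cube power4_eq_xxxx mult_ac)
  finally show ?thesis .
qed

lemma busy_period_le:
  assumes T: "2 * workload_offset / (1 - rho) \<le> T"
  shows "0 \<le> T" and "workload P U V T \<le> 0" and "busy_end P U V \<le> T"
proof -
  have s: "0 < 1 - rho" by (rule rho_bounds)
  have "0 \<le> 2 * workload_offset / (1 - rho)" using workload_offset_nonneg s by simp
  then show T0: "0 \<le> T" using T by linarith
  have "2 * workload_offset \<le> (1 - rho) * T" using T s by (simp add: divide_le_eq mult.commute)
  then show W: "workload P U V T \<le> 0" using workload_le[OF T0] by linarith
  show "busy_end P U V \<le> T"
    unfolding busy_end_def by (rule cInf_lower) (use T0 W in auto)
qed

end

theorem theorem2:
  fixes P :: "real^'j::finite^'j"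
    and U V :: "'j \<Rightarrow> nat \<Rightarrow> real"
    and lam mu :: "real^'j"
    and Ga Gs :: "'j \<Rightarrow> real"
  assumes P: "routing_matrix P"
    and U_nonneg: "\<And>j k. U j k \<ge> 0"
    and V_nonneg: "\<And>j k. V j k \<ge> 0"
    and lam_pos: "\<And>j. lam $ j > 0"
    and mu_pos: "\<And>j. mu $ j > 0"
    and rho_lt1: "(\<Sum>j\<in>UNIV. (visit_matrix P *v lam) $ j / mu $ j) < 1"
    and Ga_nonneg: "\<And>j. Ga j \<ge> 0"
    and Gs_nonneg: "\<And>j. Gs j \<ge> 0"
    and arr_bd: "\<And>j k. k \<ge> 1 \<Longrightarrow>
        \<bar>(\<Sum>i=1..k. U j i) - real k / lam $ j\<bar> \<le> Ga j * phi (real k)"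
    and srv_bd: "\<And>j k. k \<ge> 1 \<Longrightarrow>
        \<bar>(\<Sum>i=1..k. V j i) - real k / mu $ j\<bar> \<le> Gs j * phi (real k)"
    and Gamma_large: "(MIN j. lam $ j) * (MAX j. max (Ga j) (Gs j)) \<ge> exp (2 * exp 1)"
  shows "let J = real CARD('j);
             \<Gamma> = (MAX j. max (Ga j) (Gs j));
             lbm = (MAX j. (visit_matrix P *v lam) $ j);
             \<rho> = (\<Sum>j\<in>UNIV. (visit_matrix P *v lam) $ j / mu $ j);
             B = busy_end P U V
         in (\<exists>t\<ge>0. workload P U V t \<le> 0) \<and>
            B \<le> 5 * (4 * J + 3)^2 * lbm^3 * \<Gamma>^4 / (1 - \<rho>)^2
                 * ln (ln (2 * (4 * J + 3) * lbm^2 * \<Gamma>^2 / (1 - \<rho>))) \<and>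
            (\<forall>t\<in>{0..B}. workload P U V t \<le>
                 2 * (4 * J + 3)^2 * lbm^3 * \<Gamma>^4 / (1 - \<rho>)
                 * ln (ln ((4 * J + 3) * lbm^2 * \<Gamma>^2 / (1 - \<rho>)))
                 + \<Gamma> + 3 * lbm^2 * \<Gamma>^3)"
proof -
  interpret mcss P U V lam mu Ga Gs
    by unfold_locales (fact P lam_pos mu_pos rho_lt1 Ga_nonneg arr_bd srv_bd Gamma_large)+
  define J where "J = real CARD('j)"
  define T where "T = 5 * (4 * J + 3)^2 * lbar_max^3 * Gam^4 / (1 - rho)^2
    * ln (ln (2 * (4 * J + 3) * lbar_max^2 * Gam^2 / (1 - rho)))"
  have T: "2 * workload_offset / (1 - rho) \<le> T" using busy_time_le by (simp add: T_def J_def)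
  note busy = busy_period_le[OF T]
  have "0 \<le> Gam + 3 * lbar_max^2 * Gam^3" using Gam_pos by simp
  then have "workload P U V t \<le> 2 * (4 * J + 3)^2 * lbar_max^3 * Gam^4 / (1 - rho)
      * ln (ln ((4 * J + 3) * lbar_max^2 * Gam^2 / (1 - rho))) + Gam + 3 * lbar_max^2 * Gam^3"
    if "0 \<le> t" for t
    using workload_le_offset[OF that] workload_offset_le[folded J_def] by linarith
  with busy show ?thesis
    unfolding Let_def J_def[symmetric] Gam_def[symmetric] rho_def[symmetric]
      lbar_max_def[symmetric] T_def[symmetric] by auto
qed

end
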